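(* For the concurrent stepped-wedge design with $m$ interventions and $T\ge3$ periods (described in the context), suppose $2+b-bT\neq0$ and $3+b-2bT\ne 0$ and the relevant matrix is invertible. Then the matrix $\mathbf H$ satisfying $\mathrm E(\hat\theta)=\mathbf H\delta$ (when $\mathrm E(\bar{\mathbf y}_i)=\beta+\mathbf Z_i\delta$) is $$\mathbf H=\Big[\tfrac1c\big(\mathbf I_m+\tfrac dg\mathbf J_m\big)\Big]\otimes\mathbf r'-\tfrac1g\,\mathbf J_m\otimes\mathbf v',$$ where $\otimes$ is the Kronecker product and $\mathbf J_m$ the $m\times m$ all-ones matrix. Consequently, for each $k=1,\dots,m$, $$\mathrm E(\hat\theta_k)=\frac1c\mathbf r'\delta_k+\frac1g\Big(\frac dc\mathbf r'-\mathbf v'\Big)\delta_*,\qquad \delta_*=\sum_{k=1}^m\delta_k .$$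
   Context: Setting: a stepped-wedge trial with $T$ periods, $m$ interventions and a common cluster-period size $n$. The concurrent design has $I=m(T-1)$ clusters; cluster $i$ with $(k-1)(T-1)+1\le i\le k(T-1)$ receives only intervention $k$, and with $l=i-(k-1)(T-1)\in\{1,\dots,T-1\}$ it has $x_{kij}=1$ iff $j>l$ (and $x_{k'ij}=0$ for $k'\ne k$). Exposure time $e_{kij}=\sum_{j'\le j}x_{kij'}$. $\mathbf X_i$ is the $T\times m$ matrix with $(j,k)$ entry $x_{kij}$; $\mathbf Z_{k,i}$ is the $T\times(T-1)$ matrix with $(j,e)$ entry $1$ if $e_{kij}=e$ and $0$ otherwise; $\mathbf Z_i=(\mathbf Z_{1,i},\dots,\mathbf Z_{m,i})$. $\delta=(\delta_1',\dots,\delta_m')'$, $\delta_k=(\delta_{k,1},\dots,\delta_{k,T-1})'$. $\bar{\mathbf y}_i\in\mathbb R^T$ are cluster-period means with $\mathrm{Cov}(\bar{\mathbf y}_i)=\Sigma=\sigma_\alpha^2\mathbf 1\mathbf 1'+(\sigma_\epsilon^2/n)\mathbf I_T$. $\hat\theta=(\hat\theta_1,\dots,\hat\theta_m)'$ is the GLS estimator (known $\Sigma$) of $\theta$ in the working model $\bar{\mathbf y}_i=\beta+\mathbf X_i\theta+\mathbf 1\alpha_i+\bar\epsilon_i$ with unrestricted period effects $\beta\in\mathbb R^T$. Constants: $b=\sigma_\alpha^2/(T\sigma_\alpha^2+\sigma_\epsilon^2/n)$, $c=T(T-1)(3+b-2bT)/6$, $d=T[4T-2-3bT(T-1)]/(12m)$,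 $g=c-md=T(T-2)(2+b-bT)/12$. $\mathbf r,\mathbf v\in\mathbb R^{T-1}$ with $r_j=(T-j)[1+b(1-T-j)/2]$ and $v_j=(T-j)[1-bT+j/(T-1)]/(2m)$, $j=1,\dots,T-1$. *)

theory Defs
  imports "Jordan_Normal_Form.Matrix"
begin

(* Indices in the paper are 1-based: interventions k, clusters i, periods j, exposure e.
   JNF matrices/vectors are 0-based: row j0 <-> period j0+1, column k0 <-> intervention k0+1,
   column k0*(T-1)+e0 of Z_i / entry of delta <-> delta_{k0+1, e0+1}. *)

definition xind :: "nat \<Rightarrow> nat \<Rightarrow> nat \<Rightarrow> nat \<Rightarrow> nat" where
  "xind T k i j = (if (k - 1) * (T - 1) < i \<and> i \<le> k * (T - 1) \<and> i - (k - 1) * (T - 1) < j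
                   then 1 else 0)"

definition expo :: "nat \<Rightarrow> nat \<Rightarrow> nat \<Rightarrow> nat \<Rightarrow> nat" where
  "expo T k i j = (\<Sum>j'\<in>{1..j}. xind T k i j')"

definition Xmat :: "nat \<Rightarrow> nat \<Rightarrow> nat \<Rightarrow> real mat" where
  "Xmat T m i = mat T m (\<lambda>(j, k). real (xind T (k + 1) i (j + 1)))"

definition Zmat :: "nat \<Rightarrow> nat \<Rightarrow> nat \<Rightarrow> real mat" where
  "Zmat T m i = mat T (m * (T - 1))
     (\<lambda>(j, c). if expo T (c div (T - 1) + 1) i (j + 1) = c mod (T - 1) + 1 then 1 else 0)"

definition Sigma :: "nat \<Rightarrow> nat \<Rightarrow> real \<Rightarrow> real \<Rightarrow> real mat" where
  "Sigma T n sa2 se2 = mat T T (\<lambda>(j, j'). sa2 + (if j = j' then se2 / real n else 0))"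

(* design matrix of the working model for cluster i: (I_T | X_i), parameters (beta, theta) *)
definition Dmat :: "nat \<Rightarrow> nat \<Rightarrow> nat \<Rightarrow> real mat" where
  "Dmat T m i = mat T (T + m)
     (\<lambda>(j, c). if c < T then (if j = c then 1 else 0) else Xmat T m i $$ (j, c - T))"

definition mat_inv :: "real mat \<Rightarrow> real mat" where
  "mat_inv A = (SOME B. B \<in> carrier_mat (dim_row A) (dim_row A) \<and>
                        A * B = 1\<^sub>m (dim_row A) \<and> B * A = 1\<^sub>m (dim_row A))"

(* GLS information matrix  sum_i D_i' Sigma^{-1} D_i  (the "relevant matrix") *)
definition info_mat :: "nat \<Rightarrow> nat \<Rightarrow> nat \<Rightarrow> real \<Rightarrow> real \<Rightarrow> real mat" where
  "info_mat T m n sa2 se2 = mat (T + m) (T + m) (\<lambda>(a, a').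
     \<Sum>i\<in>{1..m * (T - 1)}.
       (transpose_mat (Dmat T m i) * mat_inv (Sigma T n sa2 se2) * Dmat T m i) $$ (a, a'))"

(* GLS estimator (known Sigma) of (beta, theta) from cluster-period means y_i, i = 1..I *)
definition gls_full :: "nat \<Rightarrow> nat \<Rightarrow> nat \<Rightarrow> real \<Rightarrow> real \<Rightarrow> (nat \<Rightarrow> real vec) \<Rightarrow> real vec" where
  "gls_full T m n sa2 se2 y = mat_inv (info_mat T m n sa2 se2) *\<^sub>v
     vec (T + m) (\<lambda>a. \<Sum>i\<in>{1..m * (T - 1)}.
       (transpose_mat (Dmat T m i) *\<^sub>v (mat_inv (Sigma T n sa2 se2) *\<^sub>v y i)) $ a)"

definition theta_hat :: "nat \<Rightarrow> nat \<Rightarrow> nat \<Rightarrow> real \<Rightarrow> real \<Rightarrow> (nat \<Rightarrow> real vec) \<Rightarrow> real vec" where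
  "theta_hat T m n sa2 se2 y = vec m (\<lambda>k. gls_full T m n sa2 se2 y $ (T + k))"

definition bconst :: "nat \<Rightarrow> nat \<Rightarrow> real \<Rightarrow> real \<Rightarrow> real" where
  "bconst T n sa2 se2 = sa2 / (real T * sa2 + se2 / real n)"

definition cconst :: "nat \<Rightarrow> real \<Rightarrow> real" where
  "cconst T b = real T * (real T - 1) * (3 + b - 2 * b * real T) / 6"

definition dconst :: "nat \<Rightarrow> nat \<Rightarrow> real \<Rightarrow> real" where
  "dconst T m b = real T * (4 * real T - 2 - 3 * b * real T * (real T - 1)) / (12 * real m)"

definition gconst :: "nat \<Rightarrow> nat \<Rightarrow> real \<Rightarrow> real" where
  "gconst T m b = cconst T b - real m * dconst T m b"

definition rvec :: "nat \<Rightarrow> real \<Rightarrow> nat \<Rightarrow> real" where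
  "rvec T b j = (real T - real j) * (1 + b * (1 - real T - real j) / 2)"

definition vvec :: "nat \<Rightarrow> nat \<Rightarrow> real \<Rightarrow> nat \<Rightarrow> real" where
  "vvec T m b j = (real T - real j) * (1 - b * real T + real j / (real T - 1)) / (2 * real m)"

definition kron :: "real mat \<Rightarrow> real mat \<Rightarrow> real mat" where
  "kron A B = mat (dim_row A * dim_row B) (dim_col A * dim_col B)
     (\<lambda>(i, j). A $$ (i div dim_row B, j div dim_col B) * B $$ (i mod dim_row B, j mod dim_col B))"

definition Jmat :: "nat \<Rightarrow> real mat" where
  "Jmat m = mat m m (\<lambda>_. 1)"

definition rrow :: "nat \<Rightarrow> real \<Rightarrow> real mat" where
  "rrow T b = mat 1 (T - 1) (\<lambda>(_, e). rvec T b (e + 1))"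

definition vrow :: "nat \<Rightarrow> nat \<Rightarrow> real \<Rightarrow> real mat" where
  "vrow T m b = mat 1 (T - 1) (\<lambda>(_, e). vvec T m b (e + 1))"

definition Hclaim :: "nat \<Rightarrow> nat \<Rightarrow> real \<Rightarrow> real mat" where
  "Hclaim T m b =
     kron ((1 / cconst T b) \<cdot>\<^sub>m (1\<^sub>m m + (dconst T m b / gconst T m b) \<cdot>\<^sub>m Jmat m)) (rrow T b)
     - kron ((1 / gconst T m b) \<cdot>\<^sub>m Jmat m) (vrow T m b)"

end

theory Submission
  imports Defs "Jordan_Normal_Form.Determinant"
begin

(* Let M be the (symmetric) GLS information matrix and R the GLS right-hand side, so that
   theta_hat_k = (M^-1 R)_(T+k). Whenever M w = e_(T+k), symmetry gives theta_hat_k = w . R, and w . R is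
   a sum over clusters of q_i . y_i with q_i = Sigma^-1 D_i w. For the concurrent design such a w can be
   written down explicitly, and the resulting "dual weights" q_i are affine in the period index apart from
   a jump when cluster i starts its treatment. Then M w = e_(T+k) reduces to two summation identities: at
   each period the weights sum to zero over all clusters, and the treated weights of the clusters of
   intervention kk sum to [kk = k]. The first identity also removes the period effects beta from
   E(theta_hat_k); what remains is, for each exposure time e, the sum of the weights along the exposure
   diagonal j = l + e + 1, which produces the coefficients r_e and v_e of H. *)

lemma mat_inv_unique:
  assumes A: "A \<in> carrier_mat n n" and B: "B \<in> carrier_mat n n"
    and AB: "A * B = 1\<^sub>m n" and BA: "B * A = 1\<^sub>m n"
  shows "mat_inv A = B"
proof -
  have "mat_inv A \<in> carrier_mat n n \<and> A * mat_inv A = 1\<^sub>m n \<and> mat_inv A * A = 1\<^sub>m n"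
    unfolding mat_inv_def carrier_matD(1)[OF A] by (rule someI[of _ B]) (use B AB BA in simp)
  then have C: "mat_inv A \<in> carrier_mat n n" "mat_inv A * A = 1\<^sub>m n" by auto
  have "mat_inv A = mat_inv A * (A * B)" using AB C(1) by simp
  also have "\<dots> = (mat_inv A * A) * B" using A B C(1) by simp
  also have "\<dots> = B" using C B by simp
  finally show ?thesis .
qed

lemma mat_inv_right_inverse:
  assumes inv: "invertible_mat A" and A: "A \<in> carrier_mat n n"
  shows "mat_inv A \<in> carrier_mat n n" and "A * mat_inv A = 1\<^sub>m n"
proof -
  obtain B where AB: "A * B = 1\<^sub>m n" and BA: "B * A = 1\<^sub>m (dim_row B)"
    using inv A unfolding invertible_mat_def inverts_mat_def by auto
  have "B \<in> carrier_mat n n"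
    using arg_cong[OF AB, of dim_col] arg_cong[OF BA, of dim_col] A by auto
  with A AB BA have "mat_inv A = B" by (intro mat_inv_unique) auto
  with AB \<open>B \<in> carrier_mat n n\<close> show "mat_inv A \<in> carrier_mat n n" "A * mat_inv A = 1\<^sub>m n" by auto
qed

lemma mat_inv_mult_vec_index_symmetric:
  fixes A :: "real mat"
  assumes A: "A \<in> carrier_mat n n" and sym: "transpose_mat A = A" and inv: "invertible_mat A"
    and w: "w \<in> carrier_vec n" and Aw: "A *\<^sub>v w = unit_vec n r" and r: "r < n"
    and v: "v \<in> carrier_vec n"
  shows "(mat_inv A *\<^sub>v v) $ r = w \<bullet> v"
proof -
  note inverse = mat_inv_right_inverse[OF inv A]
  have "(mat_inv A *\<^sub>v v) $ r = unit_vec n r \<bullet> (mat_inv A *\<^sub>v v)"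
    using inverse(1) v r by simp
  also have "\<dots> = (transpose_mat A *\<^sub>v w) \<bullet> (mat_inv A *\<^sub>v v)"
    using sym Aw by simp
  also have "\<dots> = w \<bullet> (A *\<^sub>v (mat_inv A *\<^sub>v v))"
    using A w inverse(1) v by (intro transpose_vec_mult_scalar) auto
  also have "\<dots> = w \<bullet> v"
    using A inverse v by (simp flip: assoc_mult_mat_vec)
  finally show ?thesis .
qed

lemma mult_mat_vec_sum_entries:
  assumes "\<And>i. i \<in> I \<Longrightarrow> B i \<in> carrier_mat nr nc" and "w \<in> carrier_vec nc"
  shows "mat nr nc (\<lambda>(a, a'). \<Sum>i\<in>I. B i $$ (a, a')) *\<^sub>v w = vec nr (\<lambda>a. \<Sum>i\<in>I. (B i *\<^sub>v w) $ a)"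
proof (rule eq_vecI)
  fix a assume "a < dim_vec (vec nr (\<lambda>a. \<Sum>i\<in>I. (B i *\<^sub>v w) $ a))"
  then have a: "a < nr" by simp
  have "(mat nr nc (\<lambda>(a, a'). \<Sum>i\<in>I. B i $$ (a, a')) *\<^sub>v w) $ a
      = (\<Sum>a'<nc. (\<Sum>i\<in>I. B i $$ (a, a')) * w $ a')"
    using assms(2) a by (simp add: scalar_prod_def atLeast0LessThan)
  also have "\<dots> = (\<Sum>i\<in>I. \<Sum>a'<nc. B i $$ (a, a') * w $ a')"
    by (simp add: sum_distrib_right sum.swap[of _ I])
  also have "\<dots> = (\<Sum>i\<in>I. (B i *\<^sub>v w) $ a)"
    using a by (intro sum.cong refl)
      (auto simp: scalar_prod_def atLeast0LessThan carrier_matD[OF assms(1)] carrier_vecD[OF assms(2)]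
        intro!: sum.cong)
  finally show "(mat nr nc (\<lambda>(a, a'). \<Sum>i\<in>I. B i $$ (a, a')) *\<^sub>v w) $ a
      = vec nr (\<lambda>a. \<Sum>i\<in>I. (B i *\<^sub>v w) $ a) $ a"
    using a by simp
qed simp

lemma transpose_mat_sum_entries:
  assumes "\<And>i. i \<in> I \<Longrightarrow> B i \<in> carrier_mat n n" and "\<And>i. i \<in> I \<Longrightarrow> transpose_mat (B i) = B i"
  shows "transpose_mat (mat n n (\<lambda>(a, a'). \<Sum>i\<in>I. B i $$ (a, a'))) = mat n n (\<lambda>(a, a'). \<Sum>i\<in>I. B i $$ (a, a'))"
proof (rule eq_matI)
  fix a a' assume "a < dim_row (mat n n (\<lambda>(a, a'). \<Sum>i\<in>I. B i $$ (a, a')))"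
    "a' < dim_col (mat n n (\<lambda>(a, a'). \<Sum>i\<in>I. B i $$ (a, a')))"
  then have "a < n" "a' < n" by auto
  moreover have "B i $$ (a', a) = B i $$ (a, a')" if "i \<in> I" for i
    using assms[OF that] \<open>a < n\<close> \<open>a' < n\<close> by (metis carrier_matD index_transpose_mat(1))
  ultimately show "transpose_mat (mat n n (\<lambda>(a, a'). \<Sum>i\<in>I. B i $$ (a, a'))) $$ (a, a') = mat n n (\<lambda>(a, a'). \<Sum>i\<in>I. B i $$ (a, a')) $$ (a, a')"
    by simp
qed auto

lemma scalar_prod_vec_sum:
  assumes "\<And>i. i \<in> I \<Longrightarrow> v i \<in> carrier_vec n" and "w \<in> carrier_vec n"
  shows "w \<bullet> vec n (\<lambda>a. \<Sum>i\<in>I. v i $ a) = (\<Sum>i\<in>I. w \<bullet> v i)"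
proof -
  have "w \<bullet> vec n (\<lambda>a. \<Sum>i\<in>I. v i $ a) = (\<Sum>i\<in>I. \<Sum>a<n. w $ a * v i $ a)"
    by (simp add: scalar_prod_def atLeast0LessThan sum_distrib_left sum.swap[of _ I])
  also have "\<dots> = (\<Sum>i\<in>I. w \<bullet> v i)"
    by (intro sum.cong refl) (simp add: scalar_prod_def atLeast0LessThan carrier_vecD[OF assms(1)])
  finally show ?thesis .
qed

lemma quadratic_form_mat_carrier:
  assumes "D \<in> carrier_mat nr nc" and "S \<in> carrier_mat nr nr"
  shows "transpose_mat D * S * D \<in> carrier_mat nc nc"
  using assms by simp

lemma quadratic_form_mat_mult_vec:
  fixes D S :: "'a :: comm_semiring_0 mat"
  assumes "D \<in> carrier_mat nr nc" and "S \<in> carrier_mat nr nr" and "w \<in> carrier_vec nc"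
  shows "(transpose_mat D * S * D) *\<^sub>v w = transpose_mat D *\<^sub>v (S *\<^sub>v (D *\<^sub>v w))"
  using assms by (simp add: assoc_mult_mat_vec[of _ nc nr _ nc])

lemma transpose_quadratic_form_mat:
  fixes D S :: "'a :: comm_semiring_0 mat"
  assumes "D \<in> carrier_mat nr nc" and "S \<in> carrier_mat nr nr" and "transpose_mat S = S"
  shows "transpose_mat (transpose_mat D * S * D) = transpose_mat D * S * D"
proof -
  have "transpose_mat (transpose_mat D * S * D) = transpose_mat D * transpose_mat (transpose_mat D * S)"
    using assms by (intro transpose_mult[of _ nc nr _ nc]) auto
  also have "transpose_mat (transpose_mat D * S) = S * D"
    using assms transpose_mult[of "transpose_mat D" nc nr S nr] by simp
  finally show ?thesis using assms by simp
qed

lemma scalar_prod_quadratic_form: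
  fixes D S :: "'a :: comm_semiring_0 mat"
  assumes D: "D \<in> carrier_mat nr nc" and S: "S \<in> carrier_mat nr nr" and sym: "transpose_mat S = S"
    and w: "w \<in> carrier_vec nc" and y: "y \<in> carrier_vec nr"
  shows "w \<bullet> (transpose_mat D *\<^sub>v (S *\<^sub>v y)) = (S *\<^sub>v (D *\<^sub>v w)) \<bullet> y"
proof -
  have "w \<bullet> (transpose_mat D *\<^sub>v (S *\<^sub>v y)) = (S *\<^sub>v y) \<bullet> (D *\<^sub>v w)"
    using D S w y by (subst comm_scalar_prod[of _ nc]) (auto intro: transpose_vec_mult_scalar)
  also have "\<dots> = y \<bullet> (S *\<^sub>v (D *\<^sub>v w))"
    using transpose_vec_mult_scalar[OF S _ y, of "D *\<^sub>v w"] D w sym by simp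
  also have "\<dots> = (S *\<^sub>v (D *\<^sub>v w)) \<bullet> y"
    using D S w y by (intro comm_scalar_prod[of _ nr]) auto
  finally show ?thesis .
qed

lemma sum_real_lessThan: "(\<Sum>j<n. real j) = real n * (real n - 1) / 2"
  by (induction n) (auto simp: field_simps)

lemma sum_real_power2_lessThan: "(\<Sum>j<n. real j ^ 2) = (real n - 1) * real n * (2 * real n - 1) / 6"
  by (induction n) (auto simp: field_simps power2_eq_square)

lemma sum_affine_lessThan: "(\<Sum>j<n. p + q * real j) = real n * p + q * (real n * (real n - 1) / 2)"
  by (simp add: sum.distrib sum_distrib_left[symmetric] sum_real_lessThan)

lemma sum_quadratic_lessThan: "(\<Sum>j<n. p + q * real j + r * real j ^ 2) =
   real n * p + q * (real n * (real n - 1) / 2) + r * ((real n - 1) * real n * (2 * real n - 1) / 6)"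
  by (simp add: sum.distrib sum_distrib_left[symmetric] sum_real_lessThan sum_real_power2_lessThan)

lemma sum_lessThan_indicator_less:
  assumes "j \<le> n" shows "(\<Sum>l<n. if l < j then 1 else 0 :: real) = real j"
proof -
  have "{..<n} \<inter> {l. l < j} = {..<j}" using assms by auto
  then show ?thesis by (simp add: sum.If_cases)
qed

lemma sum_lessThan_upper_part:
  assumes "l < n"
  shows "(\<Sum>j<n. if l < j then f j else 0) = (\<Sum>j<n. f j) - (\<Sum>j<Suc l. f j :: real)"
proof -
  have split: "{..<n} = {..<Suc l} \<union> {Suc l..<n}" using assms by auto
  have "(\<Sum>j<n. f j) = (\<Sum>j<Suc l. f j) + (\<Sum>j\<in>{Suc l..<n}. f j)"
    by (subst split, rule sum.union_disjoint) auto
  moreover have "{..<n} \<inter> {j. l < j} = {Suc l..<n}" by auto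
  ultimately show ?thesis by (simp add: sum.If_cases)
qed

definition Sigma_inv :: "nat \<Rightarrow> real \<Rightarrow> real \<Rightarrow> real mat" where
  "Sigma_inv T b s = mat T T (\<lambda>(j, j'). ((if j = j' then 1 else 0) - b) / s)"

lemma Sigma_inv_carrier: "Sigma_inv T b s \<in> carrier_mat T T"
  by (simp add: Sigma_inv_def)

lemma transpose_Sigma_inv: "transpose_mat (Sigma_inv T b s) = Sigma_inv T b s"
  by (rule eq_matI) (auto simp: Sigma_inv_def)

lemma mat_inv_Sigma:
  assumes "n \<ge> 1" and "sa2 \<ge> 0" and "se2 > 0"
  shows "mat_inv (Sigma T n sa2 se2) = Sigma_inv T (bconst T n sa2 se2) (se2 / real n)"
proof -
  define s where "s = se2 / real n"
  define b where "b = bconst T n sa2 se2"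
  have s: "s > 0" using assms by (simp add: s_def)
  then have "real T * sa2 + s > 0" using assms by (simp add: add_nonneg_pos)
  then have b: "sa2 * (1 - real T * b) = b * s"
    by (simp add: b_def bconst_def flip: s_def) (simp add: field_simps)
  have entry: "(\<Sum>i<T. (sa2 + (if j = i then s else 0)) * ((if i = j' then 1 else 0) - b) / s)
      = (if j = j' then 1 else 0)" if "j < T" "j' < T" for j j'
  proof -
    have "(\<Sum>i<T. (sa2 + (if j = i then s else 0)) * ((if i = j' then 1 else 0) - b) / s)
        = sa2 / s * (\<Sum>i<T. (if i = j' then 1 else 0) - b)
          + (\<Sum>i<T. if j = i then (if i = j' then 1 else 0) - b else 0)"
      unfolding sum_distrib_left sum.distrib[symmetric] using s by (intro sum.cong) (auto simp: field_simps)
    also have "\<dots> = sa2 * (1 - real T * b) / s + ((if j = j' then 1 else 0) - b)"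
      using that by (simp add: sum_subtractf)
    finally show ?thesis using b s by simp
  qed
  have carrier: "Sigma T n sa2 se2 \<in> carrier_mat T T" "Sigma_inv T b s \<in> carrier_mat T T"
    by (simp_all add: Sigma_def Sigma_inv_def)
  have right: "Sigma T n sa2 se2 * Sigma_inv T b s = 1\<^sub>m T"
    unfolding Sigma_def Sigma_inv_def s_def[symmetric]
    by (rule eq_matI) (auto simp: scalar_prod_def atLeast0LessThan entry)
  have "mat_inv (Sigma T n sa2 se2) = Sigma_inv T b s"
    using carrier right mat_mult_left_right_inverse[OF carrier right] by (rule mat_inv_unique)
  then show ?thesis by (simp add: b_def s_def)
qed

lemma Sigma_inv_mult_vec:
  assumes "x \<in> carrier_vec T"
  shows "Sigma_inv T b s *\<^sub>v x = vec T (\<lambda>j. (x $ j - b * (\<Sum>j'<T. x $ j')) / s)"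
proof (rule eq_vecI)
  fix j assume "j < dim_vec (vec T (\<lambda>j. (x $ j - b * (\<Sum>j'<T. x $ j')) / s))"
  then have j: "j < T" by simp
  have "(Sigma_inv T b s *\<^sub>v x) $ j = (\<Sum>j'<T. ((if j = j' then 1 else 0) - b) / s * x $ j')"
    using assms j by (simp add: Sigma_inv_def scalar_prod_def atLeast0LessThan)
  also have "\<dots> = (\<Sum>j'<T. (if j = j' then x $ j' else 0) - b * x $ j') / s"
    unfolding sum_divide_distrib by (intro sum.cong) (auto simp: field_simps)
  also have "\<dots> = (x $ j - b * (\<Sum>j'<T. x $ j')) / s"
    using j by (simp add: sum_subtractf sum_distrib_left)
  finally show "(Sigma_inv T b s *\<^sub>v x) $ j = vec T (\<lambda>j. (x $ j - b * (\<Sum>j'<T. x $ j')) / s) $ j"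
    using j by simp
qed (simp add: Sigma_inv_def)

lemma block_index_less:
  fixes kk m e K :: nat
  assumes "kk < m" "e < K"
  shows "kk * K + e < m * K"
proof -
  have "kk * K + e < (kk + 1) * K" using assms(2) by simp
  also have "\<dots> \<le> m * K" using assms(1) by (intro mult_right_mono) auto
  finally show ?thesis .
qed

lemma sum_lessThan_mult_blocks:
  fixes m K :: nat
  shows "(\<Sum>c<m * K. f c) = (\<Sum>kk<m. \<Sum>e<K. f (kk * K + e))"
proof -
  have "(\<Sum>c<m * K. f c) = (\<Sum>kk<m. \<Sum>c\<in>{kk * K..<kk * K + K}. f c)"
    by (simp add: sum.nat_group)
  also have "\<dots> = (\<Sum>kk<m. \<Sum>e<K. f (kk * K + e))"
    by (simp add: sum.atLeastLessThan_shift_0 atLeast0LessThan comp_def)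
  finally show ?thesis .
qed

(* The cluster of intervention kk + 1 that switches to treatment after period l + 1 (paper indexing
   i = (k - 1)(T - 1) + l' with k = kk + 1, l' = l + 1); with 0-based periods it is treated iff l < j. *)
definition cluster :: "nat \<Rightarrow> nat \<Rightarrow> nat \<Rightarrow> nat" where
  "cluster T kk l = kk * (T - 1) + l + 1"

lemma sum_clusters:
  "(\<Sum>i\<in>{1..m * (T - 1)}. f i) = (\<Sum>kk<m. \<Sum>l<T - 1. f (cluster T kk l))"
proof -
  have "(\<Sum>i\<in>{1..m * (T - 1)}. f i) = (\<Sum>c<m * (T - 1). f (c + 1))"
    by (simp add: sum_bounds_lt_plus1)
  then show ?thesis by (simp add: cluster_def sum_lessThan_mult_blocks)
qed

lemma xind_cluster:
  assumes "l < T - 1"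
  shows "xind T (k' + 1) (cluster T kk l) j = (if k' = kk \<and> l + 1 < j then 1 else 0)"
proof (cases "k' = kk")
  case False
  have "\<not> (k' * (T - 1) < kk * (T - 1) + l + 1 \<and> kk * (T - 1) + l + 1 \<le> (k' + 1) * (T - 1))"
  proof
    assume "k' * (T - 1) < kk * (T - 1) + l + 1 \<and> kk * (T - 1) + l + 1 \<le> (k' + 1) * (T - 1)"
    then have "(kk * (T - 1) + l) div (T - 1) = k'" by (intro div_nat_eqI) (auto simp: algebra_simps)
    then show False using assms False by simp
  qed
  then show ?thesis using False unfolding xind_def cluster_def add_diff_cancel_right' by auto
next
  case True
  have "kk * (T - 1) + l + 1 \<le> (kk + 1) * (T - 1)" using assms by simp
  then show ?thesis using True unfolding xind_def cluster_def add_diff_cancel_right' by auto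
qed

lemma expo_cluster:
  assumes "l < T - 1"
  shows "expo T (k' + 1) (cluster T kk l) (j + 1) = (if k' = kk then j - l else 0)"
proof -
  have "expo T (k' + 1) (cluster T kk l) (j + 1) = (\<Sum>j'\<in>{1..j + 1}. if k' = kk \<and> l + 1 < j' then 1 else 0)"
    unfolding expo_def xind_cluster[OF assms] ..
  also have "\<dots> = card {j' \<in> {1..j + 1}. k' = kk \<and> l + 1 < j'}"
    by (simp only: sum.inter_filter[OF finite_atLeastAtMost, symmetric] card_eq_sum)
  also have "{j' \<in> {1..j + 1}. k' = kk \<and> l + 1 < j'} = (if k' = kk then {l + 2..j + 1} else {})"
    by auto
  finally show ?thesis by simp
qed

lemma Dmat_carrier: "Dmat T m i \<in> carrier_mat T (T + m)"
  by (simp add: Dmat_def)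

lemma Zmat_carrier: "Zmat T m i \<in> carrier_mat T (m * (T - 1))"
  by (simp add: Zmat_def)

lemma Dmat_cluster:
  assumes "l < T - 1" "j < T" "a < T + m"
  shows "Dmat T m (cluster T kk l) $$ (j, a) = (if a = j \<or> a = T + kk \<and> l < j then 1 else 0)"
proof -
  have "Dmat T m (cluster T kk l) $$ (j, a)
      = (if a < T then (if j = a then 1 else 0) else real (xind T (a - T + 1) (cluster T kk l) (j + 1)))"
    using assms by (simp add: Dmat_def Xmat_def)
  then show ?thesis unfolding xind_cluster[OF assms(1)] using assms by auto
qed

lemma Zmat_cluster:
  assumes "l < T - 1" "j < T" "c < m * (T - 1)"
  shows "Zmat T m (cluster T kk l) $$ (j, c)
    = (if c div (T - 1) = kk \<and> j = l + c mod (T - 1) + 1 then 1 else 0)"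
proof -
  have "Zmat T m (cluster T kk l) $$ (j, c)
      = (if expo T (c div (T - 1) + 1) (cluster T kk l) (j + 1) = c mod (T - 1) + 1 then 1 else 0)"
    using assms by (simp add: Zmat_def)
  then show ?thesis unfolding expo_cluster[OF assms(1)] by auto
qed

(* info_inv_row T m b s k is the row T + k of the inverse information matrix, indexed like (beta, theta),
   with s = sigma_eps^2 / n; dual_weight T m b k kk l j is entry j of Sigma^-1 D_i times this row, for
   i = cluster T kk l. *)
definition dual_period_coeff :: "nat \<Rightarrow> nat \<Rightarrow> real \<Rightarrow> real" where
  "dual_period_coeff T m b = 1 / (real m * (real T - 1) * gconst T m b)"

definition dual_treat_coeff :: "nat \<Rightarrow> nat \<Rightarrow> real \<Rightarrow> nat \<Rightarrow> nat \<Rightarrow> real" where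
  "dual_treat_coeff T m b k kk = ((if kk = k then 1 else 0) + dconst T m b / gconst T m b) / cconst T b"

definition info_inv_row :: "nat \<Rightarrow> nat \<Rightarrow> real \<Rightarrow> real \<Rightarrow> nat \<Rightarrow> real vec" where
  "info_inv_row T m b s k = vec (T + m) (\<lambda>a. s *
     (if a < T then - dual_period_coeff T m b * real a else dual_treat_coeff T m b k (a - T)))"

definition dual_weight :: "nat \<Rightarrow> nat \<Rightarrow> real \<Rightarrow> nat \<Rightarrow> nat \<Rightarrow> nat \<Rightarrow> nat \<Rightarrow> real" where
  "dual_weight T m b k kk l j =
     dual_period_coeff T m b * (b * real T * (real T - 1) / 2 - real j)
     + dual_treat_coeff T m b k kk * ((if l < j then 1 else 0) - b * (real T - 1 - real l))"

context
  fixes T m :: nat and b :: real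
  assumes T2: "T \<ge> 2" and m1: "m \<ge> 1"
    and c0: "cconst T b \<noteq> 0" and g0: "gconst T m b \<noteq> 0"
begin

lemma clusters_times_dual_period_coeff: "real m * (real T - 1) * dual_period_coeff T m b = 1 / gconst T m b"
  using T2 m1 by (simp add: dual_period_coeff_def)

lemma sum_dual_treat_coeff:
  assumes "k < m" shows "(\<Sum>kk<m. dual_treat_coeff T m b k kk) = 1 / gconst T m b"
proof -
  have "(\<Sum>kk<m. dual_treat_coeff T m b k kk) = (1 + real m * dconst T m b / gconst T m b) / cconst T b"
    using assms by (simp add: dual_treat_coeff_def sum.distrib flip: sum_divide_distrib)
  also have "\<dots> = 1 / gconst T m b"
    using c0 g0 by (simp add: gconst_def field_simps)
  finally show ?thesis .
qed

lemma dual_weight_sum_clusters: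
  assumes "k < m" "j < T"
  shows "(\<Sum>kk<m. \<Sum>l<T - 1. dual_weight T m b k kk l j) = 0"
proof -
  define A where "A = b * real T * (real T - 1) / 2 - real j"
  have "(\<Sum>l<T - 1. (if l < j then 1 else 0) - b * (real T - 1 - real l))
      = real j - b * ((real T - 1) * (real T - 1) - (\<Sum>l<T - 1. real l))"
    using assms by (simp add: sum_subtractf sum_lessThan_indicator_less sum_distrib_left[symmetric]
        sum.distrib)
  also have "\<dots> = - A"
    using T2 by (simp add: sum_real_lessThan A_def field_simps)
  finally have "(\<Sum>l<T - 1. (if l < j then 1 else 0) - b * (real T - 1 - real l)) = - A" .
  then have inner: "(\<Sum>l<T - 1. dual_weight T m b k kk l j)
      = ((real T - 1) * dual_period_coeff T m b - dual_treat_coeff T m b k kk) * A" for kk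
    using T2 by (simp add: dual_weight_def sum.distrib sum_distrib_left[symmetric]
        flip: A_def) (simp add: algebra_simps)
  have "(\<Sum>kk<m. \<Sum>l<T - 1. dual_weight T m b k kk l j)
      = (real m * (real T - 1) * dual_period_coeff T m b - (\<Sum>kk<m. dual_treat_coeff T m b k kk)) * A"
    unfolding inner by (simp add: sum_distrib_right[symmetric] sum_subtractf)
  then show ?thesis by (simp add: clusters_times_dual_period_coeff sum_dual_treat_coeff[OF assms(1)])
qed

lemma dual_weight_sum_treated:
  "(\<Sum>l<T - 1. \<Sum>j<T. if l < j then dual_weight T m b k kk l j else 0) = (if kk = k then 1 else 0)"
proof -
  define \<kappa> where "\<kappa> = dual_period_coeff T m b"
  define \<tau> where "\<tau> = dual_treat_coeff T m b k kk"
  define E where "E = \<kappa> * b * real T * (real T - 1) / 2 + \<tau> - b * \<tau> * (real T - 1)"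
  have inner: "(\<Sum>j<T. if l < j then dual_weight T m b k kk l j else 0) =
     (- \<kappa> * real T * (real T - 1) / 2 + (real T - 1) * E) + (\<kappa> / 2 - E + b * \<tau> * (real T - 1)) * real l
     + (\<kappa> / 2 - b * \<tau>) * real l ^ 2" if "l < T - 1" for l
  proof -
    have "(\<Sum>j<T. if l < j then dual_weight T m b k kk l j else 0)
        = (\<Sum>j<T. if l < j then (E + b * \<tau> * real l) + (- \<kappa>) * real j else 0)"
      by (intro sum.cong) (auto simp: dual_weight_def E_def \<kappa>_def \<tau>_def algebra_simps)
    also have "\<dots> = (\<Sum>j<T. (E + b * \<tau> * real l) + (- \<kappa>) * real j)
        - (\<Sum>j<Suc l. (E + b * \<tau> * real l) + (- \<kappa>) * real j)"
      using that by (intro sum_lessThan_upper_part) simp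
    also have "\<dots> = (- \<kappa> * real T * (real T - 1) / 2 + (real T - 1) * E)
        + (\<kappa> / 2 - E + b * \<tau> * (real T - 1)) * real l + (\<kappa> / 2 - b * \<tau>) * real l ^ 2"
      unfolding sum_affine_lessThan by (simp add: field_simps power2_eq_square)
    finally show ?thesis .
  qed
  have "(\<Sum>l<T - 1. \<Sum>j<T. if l < j then dual_weight T m b k kk l j else 0)
     = (\<Sum>l<T - 1. (- \<kappa> * real T * (real T - 1) / 2 + (real T - 1) * E)
         + (\<kappa> / 2 - E + b * \<tau> * (real T - 1)) * real l + (\<kappa> / 2 - b * \<tau>) * real l ^ 2)"
    by (intro sum.cong) (auto simp: inner)
  also have "\<dots> = \<tau> * cconst T b
      - \<kappa> * (real T * (real T - 1) * (2 * real T - 1) / 6 - b * real T ^ 2 * (real T - 1) ^ 2 / 4)"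
    unfolding sum_quadratic_lessThan using T2
    by (simp add: E_def cconst_def field_simps power2_eq_square)
  also have "\<kappa> * (real T * (real T - 1) * (2 * real T - 1) / 6 - b * real T ^ 2 * (real T - 1) ^ 2 / 4)
      = dconst T m b / gconst T m b"
    using T2 m1 g0 by (simp add: \<kappa>_def dual_period_coeff_def dconst_def field_simps power2_eq_square)
  also have "\<tau> * cconst T b = (if kk = k then 1 else 0) + dconst T m b / gconst T m b"
    using c0 by (simp add: \<tau>_def dual_treat_coeff_def)
  finally show ?thesis by simp
qed

lemma dual_weight_sum_exposure:
  assumes "e < T - 1"
  shows "(\<Sum>l<T - 1. if l + e + 1 < T then dual_weight T m b k kk l (l + e + 1) else 0)
     = dual_treat_coeff T m b k kk * rvec T b (e + 1) - vvec T m b (e + 1) / gconst T m b"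
proof -
  define \<kappa> where "\<kappa> = dual_period_coeff T m b"
  define \<tau> where "\<tau> = dual_treat_coeff T m b k kk"
  define M where "M = T - 1 - e"
  have M: "real M = real T - 1 - real e" using assms by (simp add: M_def)
  have "{..<T - 1} \<inter> {l. l + e + 1 < T} = {..<M}" by (auto simp: M_def)
  then have "(\<Sum>l<T - 1. if l + e + 1 < T then dual_weight T m b k kk l (l + e + 1) else 0)
     = (\<Sum>l<M. dual_weight T m b k kk l (l + e + 1))"
    by (simp add: sum.If_cases)
  also have "\<dots> = (\<Sum>l<M. (\<kappa> * (b * real T * (real T - 1) / 2 - real e - 1) + \<tau> * (1 - b * (real T - 1)))
      + (b * \<tau> - \<kappa>) * real l)"
    by (intro sum.cong) (auto simp: dual_weight_def \<kappa>_def \<tau>_def algebra_simps)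
  also have "\<dots> = \<tau> * rvec T b (e + 1) + \<kappa> * real M * (b * real T * (real T - 1) - (real T + real e)) / 2"
    unfolding sum_affine_lessThan M rvec_def by (simp add: field_simps)
  also have "\<kappa> * real M * (b * real T * (real T - 1) - (real T + real e)) / 2
      = - vvec T m b (e + 1) / gconst T m b"
    using T2 m1 g0 by (simp add: \<kappa>_def dual_period_coeff_def vvec_def M field_simps)
  finally show ?thesis by (simp add: \<tau>_def)
qed

end

lemma info_inv_row_carrier: "info_inv_row T m b s k \<in> carrier_vec (T + m)"
  by (simp add: info_inv_row_def)

lemma Dmat_cluster_mult_info_inv_row:
  assumes "kk < m" "l < T - 1"
  shows "Dmat T m (cluster T kk l) *\<^sub>v info_inv_row T m b s k = vec T (\<lambda>j. s *
     (- dual_period_coeff T m b * real j + dual_treat_coeff T m b k kk * (if l < j then 1 else 0)))"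
proof (rule eq_vecI)
  let ?w = "info_inv_row T m b s k"
  fix j assume "j < dim_vec (vec T (\<lambda>j. s *
     (- dual_period_coeff T m b * real j + dual_treat_coeff T m b k kk * (if l < j then 1 else 0))))"
  then have j: "j < T" by simp
  have "(Dmat T m (cluster T kk l) *\<^sub>v ?w) $ j
      = (\<Sum>a<T + m. (if a = j \<or> a = T + kk \<and> l < j then 1 else 0) * ?w $ a)"
    using j assms carrier_matD[OF Dmat_carrier]
    by (auto simp: scalar_prod_def atLeast0LessThan Dmat_cluster info_inv_row_def intro!: sum.cong)
  also have "\<dots> = (\<Sum>a<T + m. if a = j then ?w $ a else 0)
      + (\<Sum>a<T + m. if a = T + kk then (if l < j then ?w $ a else 0) else 0)"
    unfolding sum.distrib[symmetric] using j by (intro sum.cong) auto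
  also have "\<dots> = s * (- dual_period_coeff T m b * real j + dual_treat_coeff T m b k kk * (if l < j then 1 else 0))"
    using j assms by (simp add: info_inv_row_def algebra_simps)
  finally show "(Dmat T m (cluster T kk l) *\<^sub>v ?w) $ j = vec T (\<lambda>j. s *
     (- dual_period_coeff T m b * real j + dual_treat_coeff T m b k kk * (if l < j then 1 else 0))) $ j"
    using j by simp
qed (simp add: Dmat_def)

lemma Sigma_inv_Dmat_cluster_info_inv_row:
  assumes "s \<noteq> 0" "kk < m" "l < T - 1"
  shows "Sigma_inv T b s *\<^sub>v (Dmat T m (cluster T kk l) *\<^sub>v info_inv_row T m b s k)
    = vec T (dual_weight T m b k kk l)"
proof -
  define V where "V j = - dual_period_coeff T m b * real j + dual_treat_coeff T m b k kk * (if l < j then 1 else 0)" for j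
  have "(\<Sum>j<T. if l < j then 1 else 0 :: real) = real T - 1 - real l"
    using sum_lessThan_upper_part[of l T "\<lambda>_. 1"] assms by simp
  moreover have "(\<Sum>j<T. V j) = - dual_period_coeff T m b * (\<Sum>j<T. real j)
      + dual_treat_coeff T m b k kk * (\<Sum>j<T. if l < j then 1 else 0)"
    unfolding V_def sum.distrib sum_distrib_left[symmetric] ..
  ultimately have sum_V: "(\<Sum>j<T. V j) = - dual_period_coeff T m b * (real T * (real T - 1) / 2)
      + dual_treat_coeff T m b k kk * (real T - 1 - real l)"
    by (simp add: sum_real_lessThan)
  have "Sigma_inv T b s *\<^sub>v (Dmat T m (cluster T kk l) *\<^sub>v info_inv_row T m b s k)
      = Sigma_inv T b s *\<^sub>v vec T (\<lambda>j. s * V j)"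
    unfolding V_def Dmat_cluster_mult_info_inv_row[OF assms(2,3)] ..
  also have "\<dots> = vec T (\<lambda>j. (s * V j - b * (\<Sum>j'<T. s * V j')) / s)"
    by (subst Sigma_inv_mult_vec) auto
  also have "\<dots> = vec T (\<lambda>j. V j - b * (\<Sum>j'<T. V j'))"
    using assms(1) by (intro arg_cong[of _ _ "vec T"] ext) (simp add: field_simps flip: sum_distrib_left)
  also have "\<dots> = vec T (dual_weight T m b k kk l)"
    unfolding sum_V by (intro arg_cong[of _ _ "vec T"] ext) (simp add: V_def dual_weight_def field_simps)
  finally show ?thesis .
qed

lemma transpose_Dmat_cluster_mult_dual_weight:
  assumes "kk < m" "l < T - 1" "a < T + m"
  shows "(transpose_mat (Dmat T m (cluster T kk l)) *\<^sub>v vec T (dual_weight T m b k kk l)) $ a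
    = (if a < T then dual_weight T m b k kk l a
       else if a = T + kk then (\<Sum>j<T. if l < j then dual_weight T m b k kk l j else 0) else 0)"
proof -
  have "(transpose_mat (Dmat T m (cluster T kk l)) *\<^sub>v vec T (dual_weight T m b k kk l)) $ a
      = (\<Sum>j<T. if a = j \<or> a = T + kk \<and> l < j then dual_weight T m b k kk l j else 0)"
    using assms carrier_matD[OF Dmat_carrier]
    by (auto simp: scalar_prod_def atLeast0LessThan Dmat_cluster intro!: sum.cong)
  also have "\<dots> = (if a < T then dual_weight T m b k kk l a
       else if a = T + kk then (\<Sum>j<T. if l < j then dual_weight T m b k kk l j else 0) else 0)"
    by (auto intro: sum.cong)
  finally show ?thesis .
qed

lemma scalar_prod_Zmat_cluster:
  assumes "kk < m" "l < T - 1" "\<delta> \<in> carrier_vec (m * (T - 1))"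
  shows "vec T f \<bullet> (Zmat T m (cluster T kk l) *\<^sub>v \<delta>)
    = (\<Sum>e<T - 1. (if l + e + 1 < T then f (l + e + 1) else 0) * \<delta> $ (kk * (T - 1) + e))"
proof -
  let ?Z = "Zmat T m (cluster T kk l)"
  have column: "(\<Sum>j<T. ?Z $$ (j, kk' * (T - 1) + e) * vec T f $ j)
      = (if kk' = kk then (if l + e + 1 < T then f (l + e + 1) else 0) else 0)"
    if "kk' < m" "e < T - 1" for kk' e
  proof -
    have "(\<Sum>j<T. ?Z $$ (j, kk' * (T - 1) + e) * vec T f $ j)
        = (\<Sum>j<T. if j = l + e + 1 then (if kk' = kk then f j else 0) else 0)"
      using that assms block_index_less[OF that] by (intro sum.cong refl) (auto simp: Zmat_cluster)
    then show ?thesis by simp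
  qed
  have "vec T f \<bullet> (?Z *\<^sub>v \<delta>) = (\<Sum>c<m * (T - 1). (\<Sum>j<T. ?Z $$ (j, c) * vec T f $ j) * \<delta> $ c)"
    using assms carrier_matD[OF Zmat_carrier]
    by (simp add: scalar_prod_def atLeast0LessThan sum_distrib_left sum_distrib_right
        sum.swap[of _ "{..<T}"] ac_simps)
  also have "\<dots> = (\<Sum>kk'<m. \<Sum>e<T - 1. (if kk' = kk then (if l + e + 1 < T then f (l + e + 1) else 0) else 0)
      * \<delta> $ (kk' * (T - 1) + e))"
    unfolding sum_lessThan_mult_blocks using column by (intro sum.cong refl arg_cong2[where f = "(*)"]) auto
  also have "\<dots> = (\<Sum>kk'<m. if kk' = kk then (\<Sum>e<T - 1. (if l + e + 1 < T then f (l + e + 1) else 0)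
      * \<delta> $ (kk' * (T - 1) + e)) else 0)"
    by (intro sum.cong refl) auto
  also have "\<dots> = (\<Sum>e<T - 1. (if l + e + 1 < T then f (l + e + 1) else 0) * \<delta> $ (kk * (T - 1) + e))"
    using assms by simp
  finally show ?thesis .
qed

lemma sum_dual_weight_scalar_prod_period_effects:
  assumes "T \<ge> 2" "m \<ge> 1" "cconst T b \<noteq> 0" "gconst T m b \<noteq> 0" "k < m" and \<beta>: "\<beta> \<in> carrier_vec T"
  shows "(\<Sum>kk<m. \<Sum>l<T - 1. vec T (dual_weight T m b k kk l) \<bullet> \<beta>) = 0"
proof -
  have "(\<Sum>kk<m. \<Sum>l<T - 1. vec T (dual_weight T m b k kk l) \<bullet> \<beta>)
      = (\<Sum>kk<m. \<Sum>l<T - 1. \<Sum>j<T. dual_weight T m b k kk l j * \<beta> $ j)"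
    using \<beta> by (simp add: scalar_prod_def atLeast0LessThan)
  also have "\<dots> = (\<Sum>kk<m. \<Sum>j<T. \<Sum>l<T - 1. dual_weight T m b k kk l j * \<beta> $ j)"
    by (intro sum.cong refl sum.swap)
  also have "\<dots> = (\<Sum>j<T. \<Sum>kk<m. \<Sum>l<T - 1. dual_weight T m b k kk l j * \<beta> $ j)"
    by (rule sum.swap)
  also have "\<dots> = (\<Sum>j<T. (\<Sum>kk<m. \<Sum>l<T - 1. dual_weight T m b k kk l j) * \<beta> $ j)"
    by (simp only: sum_distrib_right)
  finally show ?thesis using dual_weight_sum_clusters[OF assms(1-5)] by simp
qed

lemma sum_dual_weight_scalar_prod_mean:
  assumes "T \<ge> 2" "m \<ge> 1" "cconst T b \<noteq> 0" "gconst T m b \<noteq> 0" "k < m"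
    and \<beta>: "\<beta> \<in> carrier_vec T" and \<delta>: "\<delta> \<in> carrier_vec (m * (T - 1))"
  shows "(\<Sum>kk<m. \<Sum>l<T - 1. vec T (dual_weight T m b k kk l) \<bullet> (\<beta> + Zmat T m (cluster T kk l) *\<^sub>v \<delta>))
    = (\<Sum>kk<m. \<Sum>e<T - 1. (dual_treat_coeff T m b k kk * rvec T b (e + 1) - vvec T m b (e + 1) / gconst T m b)
        * \<delta> $ (kk * (T - 1) + e))"
proof -
  let ?Q = "\<lambda>kk l. vec T (dual_weight T m b k kk l)"
  have "(\<Sum>kk<m. \<Sum>l<T - 1. ?Q kk l \<bullet> (\<beta> + Zmat T m (cluster T kk l) *\<^sub>v \<delta>))
      = (\<Sum>kk<m. \<Sum>l<T - 1. ?Q kk l \<bullet> \<beta>) + (\<Sum>kk<m. \<Sum>l<T - 1. ?Q kk l \<bullet> (Zmat T m (cluster T kk l) *\<^sub>v \<delta>))"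
    unfolding sum.distrib[symmetric]
    by (intro sum.cong refl scalar_prod_add_distrib[of _ T] \<beta> mult_mat_vec_carrier[OF Zmat_carrier \<delta>]) simp
  also have "(\<Sum>kk<m. \<Sum>l<T - 1. ?Q kk l \<bullet> \<beta>) = 0"
    by (rule sum_dual_weight_scalar_prod_period_effects[OF assms(1-5) \<beta>])
  also have "(\<Sum>kk<m. \<Sum>l<T - 1. ?Q kk l \<bullet> (Zmat T m (cluster T kk l) *\<^sub>v \<delta>))
      = (\<Sum>kk<m. \<Sum>l<T - 1. \<Sum>e<T - 1.
          (if l + e + 1 < T then dual_weight T m b k kk l (l + e + 1) else 0) * \<delta> $ (kk * (T - 1) + e))"
    by (intro sum.cong refl scalar_prod_Zmat_cluster \<delta>) auto
  also have "\<dots> = (\<Sum>kk<m. \<Sum>e<T - 1. \<Sum>l<T - 1.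
          (if l + e + 1 < T then dual_weight T m b k kk l (l + e + 1) else 0) * \<delta> $ (kk * (T - 1) + e))"
    by (intro sum.cong refl sum.swap)
  also have "\<dots> = (\<Sum>kk<m. \<Sum>e<T - 1. (\<Sum>l<T - 1. if l + e + 1 < T then dual_weight T m b k kk l (l + e + 1) else 0)
          * \<delta> $ (kk * (T - 1) + e))"
    by (simp only: sum_distrib_right)
  also have "\<dots> = (\<Sum>kk<m. \<Sum>e<T - 1.
      (dual_treat_coeff T m b k kk * rvec T b (e + 1) - vvec T m b (e + 1) / gconst T m b) * \<delta> $ (kk * (T - 1) + e))"
    using dual_weight_sum_exposure[OF assms(1-4)] by simp
  finally show ?thesis by simp
qed

lemma Hclaim_carrier: "Hclaim T m b \<in> carrier_mat m (m * (T - 1))"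
  unfolding Hclaim_def kron_def Jmat_def rrow_def vrow_def by auto

lemma Hclaim_index:
  assumes "k < m" "c < m * (T - 1)"
  shows "Hclaim T m b $$ (k, c) = dual_treat_coeff T m b k (c div (T - 1)) * rvec T b (c mod (T - 1) + 1)
    - vvec T m b (c mod (T - 1) + 1) / gconst T m b"
proof -
  have "T - 1 > 0" using assms by (cases "T - 1") auto
  then have "c div (T - 1) < m" "c mod (T - 1) < T - 1"
    using assms(2) by (simp_all add: div_less_iff_less_mult)
  then show ?thesis
    using assms by (simp add: Hclaim_def kron_def rrow_def vrow_def Jmat_def dual_treat_coeff_def ac_simps)
qed

lemma Hclaim_mult_vec_index:
  assumes "k < m" "\<delta> \<in> carrier_vec (m * (T - 1))"
  shows "(Hclaim T m b *\<^sub>v \<delta>) $ k = (\<Sum>kk<m. \<Sum>e<T - 1.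
    (dual_treat_coeff T m b k kk * rvec T b (e + 1) - vvec T m b (e + 1) / gconst T m b) * \<delta> $ (kk * (T - 1) + e))"
proof -
  have "(Hclaim T m b *\<^sub>v \<delta>) $ k = (\<Sum>c<m * (T - 1). Hclaim T m b $$ (k, c) * \<delta> $ c)"
    using assms Hclaim_carrier[of T m b] by (simp add: scalar_prod_def atLeast0LessThan)
  also have "\<dots> = (\<Sum>kk<m. \<Sum>e<T - 1. Hclaim T m b $$ (k, kk * (T - 1) + e) * \<delta> $ (kk * (T - 1) + e))"
    by (rule sum_lessThan_mult_blocks)
  also have "\<dots> = (\<Sum>kk<m. \<Sum>e<T - 1.
      (dual_treat_coeff T m b k kk * rvec T b (e + 1) - vvec T m b (e + 1) / gconst T m b) * \<delta> $ (kk * (T - 1) + e))"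
  proof (intro sum.cong refl arg_cong2[where f = "(*)"])
    fix kk e assume "kk \<in> {..<m}" "e \<in> {..<T - 1}"
    then have "kk * (T - 1) + e < m * (T - 1)" "(kk * (T - 1) + e) div (T - 1) = kk"
      "(kk * (T - 1) + e) mod (T - 1) = e"
      by (auto intro: block_index_less)
    then show "Hclaim T m b $$ (k, kk * (T - 1) + e)
        = dual_treat_coeff T m b k kk * rvec T b (e + 1) - vvec T m b (e + 1) / gconst T m b"
      using assms(1) by (simp add: Hclaim_index)
  qed
  finally show ?thesis .
qed

lemma sum_dual_treat_coeff_regroup:
  assumes "k < m"
  shows "(\<Sum>kk<m. \<Sum>e<K. (dual_treat_coeff T m b k kk * r e - v e / gconst T m b) * x kk e)
    = 1 / cconst T b * (\<Sum>e<K. r e * x k e)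
      + 1 / gconst T m b * (\<Sum>e<K. (dconst T m b / cconst T b * r e - v e) * (\<Sum>kk<m. x kk e))"
proof -
  let ?c = "cconst T b" and ?d = "dconst T m b" and ?g = "gconst T m b"
  have "(\<Sum>kk<m. \<Sum>e<K. (dual_treat_coeff T m b k kk * r e - v e / ?g) * x kk e)
      = (\<Sum>kk<m. \<Sum>e<K. if kk = k then 1 / ?c * r e * x kk e else 0)
        + (\<Sum>kk<m. \<Sum>e<K. 1 / ?g * ((?d / ?c * r e - v e) * x kk e))"
    unfolding sum.distrib[symmetric]
    by (intro sum.cong refl) (auto simp: dual_treat_coeff_def divide_inverse algebra_simps)
  also have "(\<Sum>kk<m. \<Sum>e<K. if kk = k then 1 / ?c * r e * x kk e else 0)
      = (\<Sum>kk<m. if kk = k then (\<Sum>e<K. 1 / ?c * r e * x kk e) else 0)"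
    by (intro sum.cong refl) auto
  also have "\<dots> = 1 / ?c * (\<Sum>e<K. r e * x k e)"
    using assms by (simp add: sum_distrib_left mult.assoc)
  also have "(\<Sum>kk<m. \<Sum>e<K. 1 / ?g * ((?d / ?c * r e - v e) * x kk e))
      = 1 / ?g * (\<Sum>e<K. (?d / ?c * r e - v e) * (\<Sum>kk<m. x kk e))"
    by (simp add: sum_distrib_left sum.swap[of _ "{..<m}"])
  finally show ?thesis .
qed

lemma gconst_eq:
  assumes "m \<ge> 1"
  shows "gconst T m b = real T * (real T - 2) * (2 + b - b * real T) / 12"
  using assms by (simp add: gconst_def cconst_def dconst_def field_simps)

context
  fixes T m n :: nat and sa2 se2 :: real
  assumes T2: "T \<ge> 2" and m1: "m \<ge> 1" and n1: "n \<ge> 1" and sa2: "sa2 \<ge> 0" and se2: "se2 > 0"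
    and c0: "cconst T (bconst T n sa2 se2) \<noteq> 0" and g0: "gconst T m (bconst T n sa2 se2) \<noteq> 0"
begin

lemma info_mat_Sigma_inv:
  "info_mat T m n sa2 se2 = mat (T + m) (T + m) (\<lambda>(a, a'). \<Sum>i\<in>{1..m * (T - 1)}.
     (transpose_mat (Dmat T m i) * Sigma_inv T (bconst T n sa2 se2) (se2 / real n) * Dmat T m i) $$ (a, a'))"
  unfolding info_mat_def mat_inv_Sigma[OF n1 sa2 se2] ..

lemma transpose_info_mat: "transpose_mat (info_mat T m n sa2 se2) = info_mat T m n sa2 se2"
  unfolding info_mat_Sigma_inv
  by (rule transpose_mat_sum_entries)
    (simp_all add: quadratic_form_mat_carrier[OF Dmat_carrier Sigma_inv_carrier]
      transpose_quadratic_form_mat[OF Dmat_carrier Sigma_inv_carrier transpose_Sigma_inv])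

lemma info_mat_mult_vec_index:
  assumes "w \<in> carrier_vec (T + m)" "a < T + m"
  shows "(info_mat T m n sa2 se2 *\<^sub>v w) $ a = (\<Sum>kk<m. \<Sum>l<T - 1.
    (transpose_mat (Dmat T m (cluster T kk l))
      *\<^sub>v (Sigma_inv T (bconst T n sa2 se2) (se2 / real n) *\<^sub>v (Dmat T m (cluster T kk l) *\<^sub>v w))) $ a)"
proof -
  have "(info_mat T m n sa2 se2 *\<^sub>v w) $ a = (\<Sum>i\<in>{1..m * (T - 1)}. (transpose_mat (Dmat T m i)
      *\<^sub>v (Sigma_inv T (bconst T n sa2 se2) (se2 / real n) *\<^sub>v (Dmat T m i *\<^sub>v w))) $ a)"
    unfolding info_mat_Sigma_inv
    using assms by (simp add: mult_mat_vec_sum_entries quadratic_form_mat_carrier[OF Dmat_carrier Sigma_inv_carrier]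
      quadratic_form_mat_mult_vec[OF Dmat_carrier Sigma_inv_carrier])
  then show ?thesis unfolding sum_clusters .
qed

lemma info_mat_mult_info_inv_row:
  assumes "k < m"
  shows "info_mat T m n sa2 se2 *\<^sub>v info_inv_row T m (bconst T n sa2 se2) (se2 / real n) k
    = unit_vec (T + m) (T + k)"
proof (rule eq_vecI)
  let ?b = "bconst T n sa2 se2" and ?s = "se2 / real n"
  fix a assume "a < dim_vec (unit_vec (T + m) (T + k))"
  then have a: "a < T + m" by simp
  have "(info_mat T m n sa2 se2 *\<^sub>v info_inv_row T m ?b ?s k) $ a = (\<Sum>kk<m. \<Sum>l<T - 1.
      (transpose_mat (Dmat T m (cluster T kk l)) *\<^sub>v vec T (dual_weight T m ?b k kk l)) $ a)"
    unfolding info_mat_mult_vec_index[OF info_inv_row_carrier a]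
    using n1 se2 by (intro sum.cong refl) (simp add: Sigma_inv_Dmat_cluster_info_inv_row)
  also have "\<dots> = unit_vec (T + m) (T + k) $ a"
  proof (cases "a < T")
    case True
    have "unit_vec (T + m) (T + k) $ a = 0" using index_unit_vec(1)[of "T + k" "T + m" a] assms a True by simp
    then show ?thesis
      using a True dual_weight_sum_clusters[OF T2 m1 c0 g0 assms True]
      by (simp add: transpose_Dmat_cluster_mult_dual_weight)
  next
    case False
    then obtain k' where k': "a = T + k'" "k' < m" using a by (metis add_less_cancel_left le_Suc_ex not_less)
    then have "(\<Sum>kk<m. \<Sum>l<T - 1.
        (transpose_mat (Dmat T m (cluster T kk l)) *\<^sub>v vec T (dual_weight T m ?b k kk l)) $ a)
      = (\<Sum>kk<m. if kk = k' then (\<Sum>l<T - 1. \<Sum>j<T. if l < j then dual_weight T m ?b k kk l j else 0) else 0)"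
      by (intro sum.cong refl) (auto simp: transpose_Dmat_cluster_mult_dual_weight)
    also have "\<dots> = (if k' = k then 1 else 0)"
      using k' dual_weight_sum_treated[OF T2 m1 c0 g0] by simp
    finally show ?thesis using k' assms by simp
  qed
  finally show "(info_mat T m n sa2 se2 *\<^sub>v info_inv_row T m ?b ?s k) $ a = unit_vec (T + m) (T + k) $ a" .
qed (simp add: info_mat_def)

lemma theta_hat_index_dual_weight:
  assumes inv: "invertible_mat (info_mat T m n sa2 se2)" and y: "\<And>i. y i \<in> carrier_vec T" and k: "k < m"
  shows "theta_hat T m n sa2 se2 y $ k
    = (\<Sum>kk<m. \<Sum>l<T - 1. vec T (dual_weight T m (bconst T n sa2 se2) k kk l) \<bullet> y (cluster T kk l))"
proof -
  let ?b = "bconst T n sa2 se2" and ?s = "se2 / real n"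
  let ?S = "Sigma_inv T ?b ?s" and ?w = "info_inv_row T m ?b ?s k"
  let ?R = "\<lambda>i. transpose_mat (Dmat T m i) *\<^sub>v (?S *\<^sub>v y i)"
  have R: "?R i \<in> carrier_vec (T + m)" for i
    using mult_mat_vec_carrier[OF Sigma_inv_carrier y] Dmat_carrier[of T m i]
    by (intro mult_mat_vec_carrier[of _ "T + m" T]) simp_all
  have "theta_hat T m n sa2 se2 y $ k = gls_full T m n sa2 se2 y $ (T + k)"
    using k by (simp add: theta_hat_def)
  also have "\<dots> = (mat_inv (info_mat T m n sa2 se2) *\<^sub>v vec (T + m) (\<lambda>a. \<Sum>i\<in>{1..m * (T - 1)}. ?R i $ a)) $ (T + k)"
    unfolding gls_full_def mat_inv_Sigma[OF n1 sa2 se2] ..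
  also have "\<dots> = ?w \<bullet> vec (T + m) (\<lambda>a. \<Sum>i\<in>{1..m * (T - 1)}. ?R i $ a)"
    using k by (intro mat_inv_mult_vec_index_symmetric[OF _ transpose_info_mat inv info_inv_row_carrier
        info_mat_mult_info_inv_row]) (simp_all add: info_mat_def)
  also have "\<dots> = (\<Sum>i\<in>{1..m * (T - 1)}. ?w \<bullet> ?R i)"
    by (intro scalar_prod_vec_sum R info_inv_row_carrier)
  also have "\<dots> = (\<Sum>i\<in>{1..m * (T - 1)}. (?S *\<^sub>v (Dmat T m i *\<^sub>v ?w)) \<bullet> y i)"
    by (intro sum.cong refl scalar_prod_quadratic_form[OF Dmat_carrier Sigma_inv_carrier transpose_Sigma_inv
        info_inv_row_carrier y])
  also have "\<dots> = (\<Sum>kk<m. \<Sum>l<T - 1. vec T (dual_weight T m ?b k kk l) \<bullet> y (cluster T kk l))"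
    unfolding sum_clusters using n1 se2 by (intro sum.cong refl) (simp add: Sigma_inv_Dmat_cluster_info_inv_row)
  finally show ?thesis .
qed

lemma theta_hat_mean_index:
  assumes inv: "invertible_mat (info_mat T m n sa2 se2)"
    and \<beta>: "\<beta> \<in> carrier_vec T" and \<delta>: "\<delta> \<in> carrier_vec (m * (T - 1))" and k: "k < m"
  shows "theta_hat T m n sa2 se2 (\<lambda>i. \<beta> + Zmat T m i *\<^sub>v \<delta>) $ k = (\<Sum>kk<m. \<Sum>e<T - 1.
    (dual_treat_coeff T m (bconst T n sa2 se2) k kk * rvec T (bconst T n sa2 se2) (e + 1)
      - vvec T m (bconst T n sa2 se2) (e + 1) / gconst T m (bconst T n sa2 se2)) * \<delta> $ (kk * (T - 1) + e))"
proof -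
  have y: "\<beta> + Zmat T m i *\<^sub>v \<delta> \<in> carrier_vec T" for i
    using add_carrier_vec[OF \<beta> mult_mat_vec_carrier[OF Zmat_carrier \<delta>]] .
  show ?thesis
    unfolding theta_hat_index_dual_weight[OF inv y k]
    by (rule sum_dual_weight_scalar_prod_mean[OF T2 m1 c0 g0 k \<beta> \<delta>])
qed

end

theorem proposition1:
  fixes T m n :: nat and sa2 se2 :: real
  assumes "T \<ge> 3" and "m \<ge> 1" and "n \<ge> 1"
    and "sa2 \<ge> 0" and "se2 > 0"
    and "2 + bconst T n sa2 se2 - bconst T n sa2 se2 * real T \<noteq> 0"
    and "3 + bconst T n sa2 se2 - 2 * bconst T n sa2 se2 * real T \<noteq> 0"
    and "invertible_mat (info_mat T m n sa2 se2)"
  shows "(\<forall>\<beta> \<delta>. \<beta> \<in> carrier_vec T \<longrightarrow> \<delta> \<in> carrier_vec (m * (T - 1)) \<longrightarrow>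
            theta_hat T m n sa2 se2 (\<lambda>i. \<beta> + Zmat T m i *\<^sub>v \<delta>)
              = Hclaim T m (bconst T n sa2 se2) *\<^sub>v \<delta>)
       \<and> (\<forall>\<beta> \<delta>. \<beta> \<in> carrier_vec T \<longrightarrow> \<delta> \<in> carrier_vec (m * (T - 1)) \<longrightarrow>
            (\<forall>k < m.
               theta_hat T m n sa2 se2 (\<lambda>i. \<beta> + Zmat T m i *\<^sub>v \<delta>) $ k
               = (let b = bconst T n sa2 se2; c = cconst T b; d = dconst T m b; g = gconst T m b
                  in (1 / c) * (\<Sum>e < T - 1. rvec T b (e + 1) * \<delta> $ (k * (T - 1) + e))
                     + (1 / g) * (\<Sum>e < T - 1. (d / c * rvec T b (e + 1) - vvec T m b (e + 1))
                                     * (\<Sum>k' < m. \<delta> $ (k' * (T - 1) + e))))))"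
proof -
  let ?b = "bconst T n sa2 se2"
  have c0: "cconst T ?b \<noteq> 0" using assms(1,7) by (simp add: cconst_def)
  have g0: "gconst T m ?b \<noteq> 0" using assms(1,2,6) by (simp add: gconst_eq)
  note theta = theta_hat_mean_index[OF _ assms(2-5) c0 g0 assms(8)]
  have "theta_hat T m n sa2 se2 (\<lambda>i. \<beta> + Zmat T m i *\<^sub>v \<delta>) = Hclaim T m ?b *\<^sub>v \<delta>"
    if "\<beta> \<in> carrier_vec T" "\<delta> \<in> carrier_vec (m * (T - 1))" for \<beta> \<delta>
  proof (rule eq_vecI)
    fix k assume "k < dim_vec (Hclaim T m ?b *\<^sub>v \<delta>)"
    then have "k < m" using Hclaim_carrier[of T m ?b] by simp
    then show "theta_hat T m n sa2 se2 (\<lambda>i. \<beta> + Zmat T m i *\<^sub>v \<delta>) $ k = (Hclaim T m ?b *\<^sub>v \<delta>) $ k"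
      using assms(1) that by (simp add: theta Hclaim_mult_vec_index)
  qed (simp add: theta_hat_def carrier_matD(1)[OF Hclaim_carrier])
  then show ?thesis
    using assms(1) by (auto simp: Let_def Hclaim_mult_vec_index sum_dual_treat_coeff_regroup)
qed

end
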